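(* For all positive integers $n$ and every $2$-homogeneous polynomial $P(x)=\sum_{|\alpha|=2}a_\alpha\mathbf{x}^\alpha$ on $\ell_2^n$ (over $\mathbb{K}=\mathbb{R}$ or $\mathbb{C}$), \[ \max_{|\alpha|=2}|a_\alpha|\leq 4\sqrt2\,\|P\|. \] Moreover, this is optimal in the following sense: for every $r<\infty$ there is no constant $C\ge1$ (independent of $n$) such that $\big(\sum_{|\alpha|=2}|a_\alpha|^r\big)^{1/r}\le C\|P\|$ for all $2$-homogeneous polynomials $P=\sum_{|\alpha|=2}a_\alpha\mathbf{x}^\alpha$ on $\ell_2^n$ and all $n$.
   Context: $\mathbb{K}$ denotes $\mathbb{R}$ or $\mathbb{C}$. For $\alpha\in\mathbb{N}^n$, $|\alpha|=\alpha_1+\cdots+\alpha_n$ and $\mathbf{x}^\alpha=x_1^{\alpha_1}\cdots x_n^{\alpha_n}$. $\ell_p^n$ is $\mathbb{K}^n$ with the $p$-norm, and for a polynomial $P$ on $\ell_p^n$, $\|P\|=\sup\{|P(x)|:\|x\|_p\le1\}$. *)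

theory Defs
  imports "HOL-Analysis.Analysis"
begin

definition mindex2 :: "nat \<Rightarrow> (nat \<Rightarrow> nat) set" where
  "mindex2 n = {\<alpha>. (\<forall>i. n \<le> i \<longrightarrow> \<alpha> i = 0) \<and> (\<Sum>i<n. \<alpha> i) = 2}"

definition hpoly2 :: "nat \<Rightarrow> ((nat \<Rightarrow> nat) \<Rightarrow> 'a::real_normed_field) \<Rightarrow> (nat \<Rightarrow> 'a) \<Rightarrow> 'a" where
  "hpoly2 n a x = (\<Sum>\<alpha>\<in>mindex2 n. a \<alpha> * (\<Prod>i<n. x i ^ \<alpha> i))"

definition polynorm :: "nat \<Rightarrow> ((nat \<Rightarrow> nat) \<Rightarrow> 'a::real_normed_field) \<Rightarrow> real" where
  "polynorm n a = (SUP x\<in>{x::nat \<Rightarrow> 'a. sqrt (\<Sum>i<n. (norm (x i))\<^sup>2) \<le> 1}. norm (hpoly2 n a x))"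

end

theory Submission
  imports Defs
begin

text \<open>Every multi-index of degree 2 is \<open>e\<^sub>i + e\<^sub>j\<close>, and each coefficient is recovered from at most
  two values of \<open>P\<close> on the unit sphere: \<open>a\<^bsub>2e\<^sub>i\<^esub> = P(e\<^sub>i)\<close> and
  \<open>a\<^bsub>e\<^sub>i+e\<^sub>j\<^esub> = P((e\<^sub>i+e\<^sub>j)/\<surd>2) - P((e\<^sub>i-e\<^sub>j)/\<surd>2)\<close> for \<open>i \<noteq> j\<close>.
  Hence \<open>|a\<^sub>\<alpha>| \<le> 2\<parallel>P\<parallel> \<le> 4\<surd>2\<parallel>P\<parallel>\<close>.
  For optimality, \<open>P(x) = \<Sum>\<^sub>i x\<^sub>i\<^sup>2\<close> has \<open>\<parallel>P\<parallel> \<le> 1\<close> but \<open>n\<close> coefficients equal to \<open>1\<close>,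
  so the \<open>\<ell>\<^sub>r\<close>-norm \<open>n\<^bsup>1/r\<^esup>\<close> of its coefficients is unbounded in \<open>n\<close>.\<close>

definition pair_index :: "nat \<Rightarrow> nat \<Rightarrow> nat \<Rightarrow> nat" where
  "pair_index i j = (\<lambda>k. of_bool (k = i) + of_bool (k = j))"

lemma pair_index_commute: "pair_index i j = pair_index j i"
  by (simp add: pair_index_def fun_eq_iff)

lemma pair_index_in_mindex2:
  assumes "i < n" "j < n"
  shows "pair_index i j \<in> mindex2 n"
  using assms by (simp add: mindex2_def pair_index_def sum.distrib of_bool_def)

lemma nat_sum_eq_1_imp_delta:
  fixes f :: "'a \<Rightarrow> nat"
  assumes "finite S" "(\<Sum>k\<in>S. f k) = 1"
  obtains j where "j \<in> S" "\<And>k. k \<in> S \<Longrightarrow> f k = of_bool (k = j)"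
proof -
  obtain j where j: "j \<in> S" "f j \<noteq> 0"
    using assms(2) by (metis sum.neutral zero_neq_one)
  have "f j + (\<Sum>k\<in>S - {j}. f k) = 1"
    using assms j by (simp add: sum.remove)
  then have "f j = 1" "(\<Sum>k\<in>S - {j}. f k) = 0"
    using j(2) by linarith+
  with assms(1) show thesis
    using that j(1) by fastforce
qed

lemma nat_sum_eq_2_imp_pair:
  fixes f :: "'a \<Rightarrow> nat"
  assumes "finite S" "(\<Sum>k\<in>S. f k) = 2"
  obtains i j where "i \<in> S" "j \<in> S" "\<And>k. k \<in> S \<Longrightarrow> f k = of_bool (k = i) + of_bool (k = j)"
proof -
  obtain i where i: "i \<in> S" "f i \<noteq> 0"
    using assms(2) by (metis sum.neutral zero_neq_numeral)
  define g where "g = f(i := f i - 1)"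
  have "(\<Sum>k\<in>S. g k) = (\<Sum>k\<in>S. f k) - 1"
    using assms(1) i by (simp add: g_def sum.remove)
  with assms(2) obtain j where "j \<in> S" "\<And>k. k \<in> S \<Longrightarrow> g k = of_bool (k = j)"
    using nat_sum_eq_1_imp_delta[OF assms(1)] by (metis diff_add_inverse2 one_add_one)
  moreover have "f k = g k + of_bool (k = i)" for k
    using i(2) by (simp add: g_def)
  ultimately show thesis
    using that[OF i(1)] by (simp add: add.commute)
qed

lemma mindex2_eq_pair_indices:
  "mindex2 n = (\<lambda>(i, j). pair_index i j) ` ({..<n} \<times> {..<n})"
proof
  show "mindex2 n \<subseteq> (\<lambda>(i, j). pair_index i j) ` ({..<n} \<times> {..<n})"
  proof
    fix \<alpha> assume \<alpha>: "\<alpha> \<in> mindex2 n"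
    then obtain i j where ij: "i < n" "j < n"
      and inside: "\<And>k. k < n \<Longrightarrow> \<alpha> k = pair_index i j k"
      using nat_sum_eq_2_imp_pair[of "{..<n}" \<alpha>] by (auto simp: mindex2_def pair_index_def)
    have "\<alpha> = pair_index i j"
    proof
      fix k show "\<alpha> k = pair_index i j k"
        using \<alpha> ij inside[of k] by (cases "k < n") (auto simp: mindex2_def pair_index_def)
    qed
    with ij show "\<alpha> \<in> (\<lambda>(i, j). pair_index i j) ` ({..<n} \<times> {..<n})"
      by blast
  qed
qed (auto intro: pair_index_in_mindex2)

lemma finite_mindex2: "finite (mindex2 n)"
  by (simp add: mindex2_eq_pair_indices)

lemma monomial_pair_index:
  fixes x :: "nat \<Rightarrow> 'a::comm_ring_1"
  assumes "i < n" "j < n"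
  shows "(\<Prod>k<n. x k ^ pair_index i j k) = x i * x j"
proof -
  have "(\<Prod>k<n. x k ^ of_bool (k = l)) = x l" if "l < n" for l
  proof -
    have "(\<Prod>k<n. x k ^ of_bool (k = l)) = (\<Prod>k<n. if k = l then x k else 1)"
      by (rule prod.cong) auto
    with that show ?thesis by simp
  qed
  then show ?thesis
    using assms by (simp add: pair_index_def power_add prod.distrib)
qed

lemma norm_hpoly2_le_coeff_sum:
  fixes x :: "nat \<Rightarrow> 'a::real_normed_field"
  assumes "\<And>k. k < n \<Longrightarrow> norm (x k) \<le> 1"
  shows "norm (hpoly2 n a x) \<le> (\<Sum>\<alpha>\<in>mindex2 n. norm (a \<alpha>))"
proof -
  have "norm (a (pair_index i j) * (\<Prod>k<n. x k ^ pair_index i j k)) \<le> norm (a (pair_index i j))"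
    if "i < n" "j < n" for i j
    using that assms by (simp add: monomial_pair_index norm_mult mult_left_le mult_le_one)
  then have "(\<Sum>\<alpha>\<in>mindex2 n. norm (a \<alpha> * (\<Prod>k<n. x k ^ \<alpha> k))) \<le> (\<Sum>\<alpha>\<in>mindex2 n. norm (a \<alpha>))"
    by (intro sum_mono) (auto simp: mindex2_eq_pair_indices)
  then show ?thesis
    unfolding hpoly2_def by (rule order_trans[OF norm_sum])
qed

lemma norm_le_1_of_sum_squares_le_1:
  fixes x :: "nat \<Rightarrow> 'a::real_normed_vector"
  assumes "(\<Sum>k<n. (norm (x k))\<^sup>2) \<le> 1" "k < n"
  shows "norm (x k) \<le> 1"
proof -
  have "(norm (x k))\<^sup>2 \<le> (\<Sum>k<n. (norm (x k))\<^sup>2)"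
    using assms(2) by (intro member_le_sum) auto
  with assms(1) have "(norm (x k))\<^sup>2 \<le> 1"
    by linarith
  then show ?thesis
    by (simp add: power_le_one_iff abs_square_le_1)
qed

lemma norm_hpoly2_le_polynorm:
  fixes x :: "nat \<Rightarrow> 'a::real_normed_field"
  assumes "(\<Sum>k<n. (norm (x k))\<^sup>2) \<le> 1"
  shows "norm (hpoly2 n a x) \<le> polynorm n a"
  unfolding polynorm_def
proof (rule cSUP_upper)
  show "x \<in> {x. sqrt (\<Sum>k<n. (norm (x k))\<^sup>2) \<le> 1}"
    using assms by simp
  show "bdd_above ((\<lambda>x. norm (hpoly2 n a x)) ` {x. sqrt (\<Sum>k<n. (norm (x k))\<^sup>2) \<le> 1})"
    by (rule bdd_aboveI2[where M = "\<Sum>\<alpha>\<in>mindex2 n. norm (a \<alpha>)"])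
      (auto intro!: norm_hpoly2_le_coeff_sum norm_le_1_of_sum_squares_le_1)
qed

lemma polynorm_nonneg:
  fixes a :: "(nat \<Rightarrow> nat) \<Rightarrow> 'a::real_normed_field"
  shows "polynorm n a \<ge> 0"
  using norm_hpoly2_le_polynorm[where x = "\<lambda>_. 0 :: 'a" and n = n and a = a]
  by (simp add: order_trans[OF norm_ge_zero])

lemma hpoly2_supported:
  fixes x :: "nat \<Rightarrow> 'a::real_normed_field"
  assumes "S \<subseteq> {..<n}" and vanish: "\<And>k. k < n \<Longrightarrow> k \<notin> S \<Longrightarrow> x k = 0"
  shows "hpoly2 n a x = (\<Sum>\<alpha>\<in>(\<lambda>(i, j). pair_index i j) ` (S \<times> S). a \<alpha> * (\<Prod>k<n. x k ^ \<alpha> k))"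
  unfolding hpoly2_def
proof (rule sum.mono_neutral_right)
  show "finite (mindex2 n)" by (rule finite_mindex2)
  show "(\<lambda>(i, j). pair_index i j) ` (S \<times> S) \<subseteq> mindex2 n"
    using assms(1) by (auto intro: pair_index_in_mindex2)
  show "\<forall>\<alpha>\<in>mindex2 n - (\<lambda>(i, j). pair_index i j) ` (S \<times> S). a \<alpha> * (\<Prod>k<n. x k ^ \<alpha> k) = 0"
  proof
    fix \<alpha> assume "\<alpha> \<in> mindex2 n - (\<lambda>(i, j). pair_index i j) ` (S \<times> S)"
    then obtain i j where ij: "i < n" "j < n" "\<alpha> = pair_index i j" and "i \<notin> S \<or> j \<notin> S"
      by (auto simp: mindex2_eq_pair_indices)
    then have "x i * x j = 0"
      using vanish by auto
    with ij show "a \<alpha> * (\<Prod>k<n. x k ^ \<alpha> k) = 0"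
      by (simp add: monomial_pair_index)
  qed
qed

lemma norm_diagonal_coeff_le_polynorm:
  fixes a :: "(nat \<Rightarrow> nat) \<Rightarrow> 'a::real_normed_field"
  assumes "i < n"
  shows "norm (a (pair_index i i)) \<le> polynorm n a"
proof -
  define x :: "nat \<Rightarrow> 'a" where "x k = of_bool (k = i)" for k
  have "hpoly2 n a x = a (pair_index i i) * (x i * x i)"
    using hpoly2_supported[of "{i}" n x a] assms by (simp add: x_def monomial_pair_index)
  then have "hpoly2 n a x = a (pair_index i i)"
    by (simp add: x_def)
  moreover have "(\<Sum>k<n. (norm (x k))\<^sup>2) = (\<Sum>k<n. if k = i then 1 else 0)"
    by (rule sum.cong) (auto simp: x_def)
  then have "(\<Sum>k<n. (norm (x k))\<^sup>2) \<le> 1"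
    using assms by simp
  ultimately show ?thesis
    using norm_hpoly2_le_polynorm by metis
qed

lemma norm_offdiagonal_coeff_le_2_polynorm:
  fixes a :: "(nat \<Rightarrow> nat) \<Rightarrow> 'a::real_normed_field"
  assumes ij: "i < n" "j < n" "i \<noteq> j"
  shows "norm (a (pair_index i j)) \<le> 2 * polynorm n a"
proof -
  define c :: 'a where "c = of_real (sqrt (1 / 2))"
  define x :: "'a \<Rightarrow> nat \<Rightarrow> 'a" where "x s k = c * (of_bool (k = i) + s * of_bool (k = j))" for s k
  have "pair_index i i \<noteq> pair_index j j" "pair_index i i \<noteq> pair_index i j"
    "pair_index j j \<noteq> pair_index i j"
    using ij by (auto simp: pair_index_def fun_eq_iff)
  moreover have "(\<lambda>(p, q). pair_index p q) ` ({i, j} \<times> {i, j})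
      = {pair_index i i, pair_index j j, pair_index i j}"
    using pair_index_commute by auto
  ultimately have evaluation: "hpoly2 n a (x s) = c * c *
      (a (pair_index i i) + s * s * a (pair_index j j) + s * a (pair_index i j))" for s
    using hpoly2_supported[of "{i, j}" n "x s" a] ij
    by (simp add: x_def monomial_pair_index algebra_simps)
  have "c * c = 1 / 2"
    by (simp add: c_def flip: of_real_mult)
  then have "a (pair_index i j) = hpoly2 n a (x 1) - hpoly2 n a (x (-1))"
    unfolding evaluation by (simp add: algebra_simps)
  moreover have ball: "(\<Sum>k<n. (norm (x s k))\<^sup>2) \<le> 1" if "norm s = 1" for s
  proof -
    have "(\<Sum>k<n. (norm (x s k))\<^sup>2) = (\<Sum>k\<in>{i, j}. (norm (x s k))\<^sup>2)"
      using ij by (intro sum.mono_neutral_right) (auto simp: x_def)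
    also have "\<dots> = 1"
      using ij that by (simp add: x_def c_def norm_mult power_mult_distrib)
    finally show ?thesis by simp
  qed
  ultimately have "norm (a (pair_index i j)) \<le> norm (hpoly2 n a (x 1)) + norm (hpoly2 n a (x (-1)))"
    by (simp add: norm_triangle_ineq4)
  also have "\<dots> \<le> polynorm n a + polynorm n a"
    using ball by (intro add_mono norm_hpoly2_le_polynorm) auto
  finally show ?thesis by simp
qed

lemma norm_coeff_le_2_polynorm:
  fixes a :: "(nat \<Rightarrow> nat) \<Rightarrow> 'a::real_normed_field"
  assumes "\<alpha> \<in> mindex2 n"
  shows "norm (a \<alpha>) \<le> 2 * polynorm n a"
proof -
  obtain i j where "i < n" "j < n" "\<alpha> = pair_index i j"
    using assms by (auto simp: mindex2_eq_pair_indices)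
  then show ?thesis
    using norm_diagonal_coeff_le_polynorm[of i n a] norm_offdiagonal_coeff_le_2_polynorm[of i n j a]
      polynorm_nonneg[of n a]
    by (cases "i = j") auto
qed

lemma Max_norm_coeff_le_4_sqrt2_polynorm:
  fixes a :: "(nat \<Rightarrow> nat) \<Rightarrow> 'a::real_normed_field"
  assumes "n > 0"
  shows "Max ((\<lambda>\<alpha>. norm (a \<alpha>)) ` mindex2 n) \<le> 4 * sqrt 2 * polynorm n a"
proof -
  have "2 * polynorm n a \<le> 4 * sqrt 2 * polynorm n a"
  proof (rule mult_right_mono)
    have "1 \<le> sqrt (2 :: real)"
      by simp
    then show "2 \<le> 4 * sqrt (2 :: real)"
      by linarith
  qed (rule polynorm_nonneg)
  then have "\<forall>\<alpha>\<in>mindex2 n. norm (a \<alpha>) \<le> 4 * sqrt 2 * polynorm n a"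
    using norm_coeff_le_2_polynorm order_trans by blast
  moreover have "mindex2 n \<noteq> {}"
    using assms pair_index_in_mindex2 by blast
  ultimately show ?thesis
    using finite_mindex2 by (simp add: Max_le_iff)
qed

definition diagonal_coeffs :: "(nat \<Rightarrow> nat) \<Rightarrow> 'a::real_normed_field" where
  "diagonal_coeffs \<alpha> = of_bool (\<exists>i. \<alpha> = pair_index i i)"

lemma pair_index_eq_diagonal_iff: "pair_index i j = pair_index k k \<longleftrightarrow> i = k \<and> j = k"
proof
  assume "pair_index i j = pair_index k k"
  then have "pair_index i j k = 2"
    by (simp add: pair_index_def)
  then show "i = k \<and> j = k"
    by (auto simp: pair_index_def of_bool_def split: if_splits)
qed simp

lemma inj_pair_index_diagonal: "inj (\<lambda>i. pair_index i i)"
  by (rule injI) (simp add: pair_index_eq_diagonal_iff)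

lemma hpoly2_diagonal_coeffs:
  fixes x :: "nat \<Rightarrow> 'a::real_normed_field"
  shows "hpoly2 n diagonal_coeffs x = (\<Sum>i<n. x i ^ 2)"
proof -
  have "hpoly2 n diagonal_coeffs x = (\<Sum>\<alpha>\<in>(\<lambda>i. pair_index i i) ` {..<n}. \<Prod>k<n. x k ^ \<alpha> k)"
    unfolding hpoly2_def
    by (rule sum.mono_neutral_cong_right)
      (auto simp: finite_mindex2 diagonal_coeffs_def mindex2_eq_pair_indices pair_index_eq_diagonal_iff)
  also have "\<dots> = (\<Sum>i<n. x i ^ 2)"
    by (simp add: sum.reindex inj_on_subset[OF inj_pair_index_diagonal] monomial_pair_index power2_eq_square)
  finally show ?thesis .
qed

lemma polynorm_diagonal_coeffs_le_1:
  "polynorm n (diagonal_coeffs :: (nat \<Rightarrow> nat) \<Rightarrow> 'a::real_normed_field) \<le> 1"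
  unfolding polynorm_def
proof (rule cSUP_least)
  show "{x :: nat \<Rightarrow> 'a. sqrt (\<Sum>i<n. (norm (x i))\<^sup>2) \<le> 1} \<noteq> {}"
    by (auto intro!: exI[of _ "\<lambda>_. 0"])
next
  fix x :: "nat \<Rightarrow> 'a" assume "x \<in> {x. sqrt (\<Sum>i<n. (norm (x i))\<^sup>2) \<le> 1}"
  then have "(\<Sum>i<n. (norm (x i))\<^sup>2) \<le> 1"
    by simp
  moreover have "norm (\<Sum>i<n. x i ^ 2) \<le> (\<Sum>i<n. (norm (x i))\<^sup>2)"
    by (rule order_trans[OF norm_sum]) (simp add: norm_power)
  ultimately show "norm (hpoly2 n diagonal_coeffs x) \<le> 1"
    by (simp add: hpoly2_diagonal_coeffs)
qed

lemma sum_norm_powr_diagonal_coeffs: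
  "(\<Sum>\<alpha>\<in>mindex2 n. norm (diagonal_coeffs \<alpha> :: 'a::real_normed_field) powr r) = n"
proof -
  have "(\<Sum>\<alpha>\<in>mindex2 n. norm (diagonal_coeffs \<alpha> :: 'a) powr r)
      = (\<Sum>\<alpha>\<in>(\<lambda>i. pair_index i i) ` {..<n}. 1)"
    by (rule sum.mono_neutral_cong_right)
      (auto simp: finite_mindex2 diagonal_coeffs_def mindex2_eq_pair_indices pair_index_eq_diagonal_iff)
  then show ?thesis
    by (simp add: card_image inj_on_subset[OF inj_pair_index_diagonal])
qed

lemma lr_norm_coeff_not_bounded_by_polynorm:
  assumes "r > 0"
  shows "\<exists>n>0. \<not> (\<Sum>\<alpha>\<in>mindex2 n. norm (diagonal_coeffs \<alpha> :: 'a::real_normed_field) powr r) powr (1 / r)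
                   \<le> C * polynorm n (diagonal_coeffs :: (nat \<Rightarrow> nat) \<Rightarrow> 'a)"
proof -
  define C' where "C' = max C 1"
  define n where "n = nat \<lceil>C' powr r\<rceil> + 1"
  have "C' < real n powr (1 / r)"
  proof -
    have "C' = (C' powr r) powr (1 / r)"
      using assms by (simp add: C'_def powr_powr)
    also have "\<dots> < real n powr (1 / r)"
      using assms by (intro powr_less_mono2) (auto simp: n_def, linarith)
    finally show ?thesis .
  qed
  moreover have "C * polynorm n (diagonal_coeffs :: (nat \<Rightarrow> nat) \<Rightarrow> 'a) \<le> C' * 1"
    unfolding C'_def
    by (intro mult_mono polynorm_diagonal_coeffs_le_1 polynorm_nonneg) auto
  ultimately show ?thesis
    by (intro exI[of _ n]) (auto simp: n_def sum_norm_powr_diagonal_coeffs)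
qed

theorem proposition2:
  shows "(\<forall>n>0. \<forall>a::(nat \<Rightarrow> nat) \<Rightarrow> real.
            Max ((\<lambda>\<alpha>. norm (a \<alpha>)) ` mindex2 n) \<le> 4 * sqrt 2 * polynorm n a)
       \<and> (\<forall>n>0. \<forall>a::(nat \<Rightarrow> nat) \<Rightarrow> complex.
            Max ((\<lambda>\<alpha>. norm (a \<alpha>)) ` mindex2 n) \<le> 4 * sqrt 2 * polynorm n a)
       \<and> (\<forall>r::real>0. \<not> (\<exists>C::real\<ge>1. \<forall>n>0. \<forall>a::(nat \<Rightarrow> nat) \<Rightarrow> real.
            (\<Sum>\<alpha>\<in>mindex2 n. norm (a \<alpha>) powr r) powr (1 / r) \<le> C * polynorm n a))
       \<and> (\<forall>r::real>0. \<not> (\<exists>C::real\<ge>1. \<forall>n>0. \<forall>a::(nat \<Rightarrow> nat) \<Rightarrow> complex.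
            (\<Sum>\<alpha>\<in>mindex2 n. norm (a \<alpha>) powr r) powr (1 / r) \<le> C * polynorm n a))"
proof (intro conjI allI impI)
  show "Max ((\<lambda>\<alpha>. norm (a \<alpha>)) ` mindex2 n) \<le> 4 * sqrt 2 * polynorm n a"
    if "n > 0" for n and a :: "(nat \<Rightarrow> nat) \<Rightarrow> real"
    using that by (rule Max_norm_coeff_le_4_sqrt2_polynorm)
  show "Max ((\<lambda>\<alpha>. norm (a \<alpha>)) ` mindex2 n) \<le> 4 * sqrt 2 * polynorm n a"
    if "n > 0" for n and a :: "(nat \<Rightarrow> nat) \<Rightarrow> complex"
    using that by (rule Max_norm_coeff_le_4_sqrt2_polynorm)
  show "\<not> (\<exists>C::real\<ge>1. \<forall>n>0. \<forall>a::(nat \<Rightarrow> nat) \<Rightarrow> real.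
      (\<Sum>\<alpha>\<in>mindex2 n. norm (a \<alpha>) powr r) powr (1 / r) \<le> C * polynorm n a)"
    if "r > 0" for r
    using lr_norm_coeff_not_bounded_by_polynorm[OF that, where 'a = real] by meson
  show "\<not> (\<exists>C::real\<ge>1. \<forall>n>0. \<forall>a::(nat \<Rightarrow> nat) \<Rightarrow> complex.
      (\<Sum>\<alpha>\<in>mindex2 n. norm (a \<alpha>) powr r) powr (1 / r) \<le> C * polynorm n a)"
    if "r > 0" for r
    using lr_norm_coeff_not_bounded_by_polynorm[OF that, where 'a = complex] by meson
qed

end
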